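(* Let $R>0$ and let $E\subset\mathbb{R}^d$ be an $R$-supported body. Then $$co_R(E)=E_R\cap\Big(\bigcap_{a\in\partial E}C^a_{\mathcal{N}_R(E,a)}\Big).$$
   Context: A body is a nonempty closed subset of $\mathbb{R}^d$; $S^{d-1}$ is the unit sphere; $B(x)=\{y:|y-x|<R\}$. $E_R=\{x:\operatorname{dist}(x,E)<R\}$. The $R$-hulloid is $co_R(E)=\bigcap\{\mathbb{R}^d\setminus B : B \text{ an open ball of radius } R,\ B\cap E=\emptyset\}$ (equal to $\mathbb{R}^d$ if no such ball exists). For a body $A$ and $a\in\partial A$, $\mathcal{N}_R(A,a)=\{v\in S^{d-1}: A\cap B(a+Rv)=\emptyset\}$; $A$ is $R$-supported if $\mathcal{N}_R(A,a)\ne\emptyset$ for all $a\in\partial A$. For nonempty closed $\mathcal K\subset S^{d-1}$ and $x\in\mathbb{R}^d$, $C^x_{\mathcal K}=\bigcap_{v\in\mathcal K}(\mathbb{R}^d\setminus B(x+Rv))$. An intersection over an empty index set is $\mathbb{R}^d$. *)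

theory Defs
  imports "HOL-Analysis.Analysis"
begin

definition is_body :: "'a::euclidean_space set \<Rightarrow> bool" where
  "is_body A \<longleftrightarrow> A \<noteq> {} \<and> closed A"

definition nbhd :: "real \<Rightarrow> 'a::euclidean_space set \<Rightarrow> 'a set" where
  "nbhd R E = {x. infdist x E < R}"

text \<open>R-hulloid: intersection of complements of open R-balls disjoint from E
  (UNIV if there is no such ball, by the empty-intersection convention).\<close>
definition co_R :: "real \<Rightarrow> 'a::euclidean_space set \<Rightarrow> 'a set" where
  "co_R R E = \<Inter> {UNIV - ball c R | c. ball c R \<inter> E = {}}"

definition normals_R :: "real \<Rightarrow> 'a::euclidean_space set \<Rightarrow> 'a \<Rightarrow> 'a set" where
  "normals_R R A a = {v \<in> sphere 0 1. A \<inter> ball (a + R *\<^sub>R v) R = {}}"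

definition R_supported :: "real \<Rightarrow> 'a::euclidean_space set \<Rightarrow> bool" where
  "R_supported R A \<longleftrightarrow> is_body A \<and> (\<forall>a \<in> frontier A. normals_R R A a \<noteq> {})"

definition C_set :: "real \<Rightarrow> 'a::euclidean_space \<Rightarrow> 'a set \<Rightarrow> 'a set" where
  "C_set R x K = (\<Inter>v\<in>K. UNIV - ball (x + R *\<^sub>R v) R)"

end

theory Submission
  imports Defs
begin

text \<open>The inclusion of the hulloid in the right-hand side is immediate: a point of
  \<open>co_R R E\<close> avoids every open \<open>R\<close>-ball missing \<open>E\<close>, in particular the ball around
  itself and the balls \<open>B(a + R v)\<close> with \<open>v\<close> an \<open>R\<close>-normal. Conversely, let \<open>x\<close> lie in
  the right-hand side and suppose \<open>x \<in> B(c)\<close> for a ball \<open>B(c)\<close> missing \<open>E\<close>. Since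
  \<open>dist(c, E) \<ge> R > dist(x, E)\<close>, some \<open>m\<close> on the segment \<open>[c, x]\<close> has \<open>dist(m, E) = R\<close>,
  and \<open>x \<in> B(m)\<close>. The ball \<open>B(m)\<close> misses \<open>E\<close> and touches it at a nearest point \<open>a\<close>,
  which lies on \<open>\<partial>E\<close> and has \<open>(m - a)/R\<close> as an \<open>R\<close>-normal; so \<open>x \<notin> C^a\<close>, a
  contradiction.\<close>

lemma ball_disjoint_iff_le_infdist:
  fixes E :: "'a::metric_space set"
  assumes "E \<noteq> {}"
  shows "ball x R \<inter> E = {} \<longleftrightarrow> R \<le> infdist x E"
proof
  assume "ball x R \<inter> E = {}"
  then show "R \<le> infdist x E"
    unfolding infdist_notempty[OF assms]
    by (intro cINF_greatest[OF assms]) (auto simp: disjoint_iff not_less)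
next
  assume "R \<le> infdist x E"
  then show "ball x R \<inter> E = {}"
    using infdist_le[of _ E x] by fastforce
qed

lemma co_R_subset_nbhd:
  assumes "R > 0" and "E \<noteq> {}"
  shows "co_R R E \<subseteq> nbhd R E"
proof
  fix x assume x: "x \<in> co_R R E"
  show "x \<in> nbhd R E"
  proof (rule ccontr)
    assume "x \<notin> nbhd R E"
    then have "ball x R \<inter> E = {}"
      using ball_disjoint_iff_le_infdist[OF assms(2)] by (simp add: nbhd_def)
    then have "co_R R E \<subseteq> UNIV - ball x R"
      unfolding co_R_def by blast
    then show False
      using x \<open>R > 0\<close> by auto
  qed
qed

lemma co_R_subset_C_set_normals: "co_R R E \<subseteq> C_set R a (normals_R R E a)"
  unfolding co_R_def C_set_def normals_R_def by blast

lemma infdist_eq_on_closed_segment: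
  fixes E :: "'a::real_normed_vector set"
  assumes "R \<le> infdist c E" and "infdist x E \<le> R"
  obtains m where "m \<in> closed_segment c x" and "infdist m E = R"
proof -
  have "connected ((\<lambda>y. infdist y E) ` closed_segment c x)"
    by (intro connected_continuous_image continuous_intros connected_segment)
  then have "{infdist x E..infdist c E} \<subseteq> (\<lambda>y. infdist y E) ` closed_segment c x"
    by (rule connected_contains_Icc) auto
  moreover have "R \<in> {infdist x E..infdist c E}"
    using assms by simp
  ultimately show thesis
    using that by (metis imageE subsetD)
qed

lemma touching_ball_in_frontier:
  fixes E :: "'a::real_normed_vector set"
  assumes "R > 0" and "ball m R \<inter> E = {}" and "a \<in> E" and "dist m a = R"
  shows "a \<in> frontier E"
proof -
  have "a \<in> closure (ball m R)"
    using assms(1,4) by simp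
  moreover have "closure (ball m R) \<subseteq> closure (- E)"
    using assms(2) by (intro closure_mono) blast
  ultimately have "a \<notin> interior E"
    by (auto simp: interior_closure)
  then show ?thesis
    using assms(3) closure_subset by (auto simp: frontier_def)
qed

lemma touching_ball_normal:
  fixes E :: "'a::euclidean_space set"
  assumes "R > 0" and "ball m R \<inter> E = {}" and "dist m a = R"
  obtains v where "v \<in> normals_R R E a" and "a + R *\<^sub>R v = m"
proof
  let ?v = "(1 / R) *\<^sub>R (m - a)"
  show "a + R *\<^sub>R ?v = m"
    using assms(1) by simp
  moreover have "norm (m - a) = R"
    using assms(3) by (simp add: dist_norm)
  then have "norm ?v = 1"
    using assms(1) by simp
  ultimately show "?v \<in> normals_R R E a"
    using assms(2) unfolding normals_R_def by (auto simp: inf_commute)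
qed

lemma nbhd_inter_C_sets_subset_co_R:
  assumes "R > 0" and "closed E" and "E \<noteq> {}"
  shows "nbhd R E \<inter> (\<Inter>a\<in>frontier E. C_set R a (normals_R R E a)) \<subseteq> co_R R E"
proof
  fix x assume x: "x \<in> nbhd R E \<inter> (\<Inter>a\<in>frontier E. C_set R a (normals_R R E a))"
  show "x \<in> co_R R E"
    unfolding co_R_def
  proof (clarify, rule ccontr)
    fix c assume c: "ball c R \<inter> E = {}" and "x \<notin> UNIV - ball c R"
    then have xc: "dist c x < R" by simp
    have "R \<le> infdist c E"
      using c ball_disjoint_iff_le_infdist[OF assms(3)] by blast
    moreover have "infdist x E \<le> R"
      using x by (simp add: nbhd_def)
    ultimately obtain m where m: "m \<in> closed_segment c x" and im: "infdist m E = R"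
      by (rule infdist_eq_on_closed_segment)
    have mx: "dist m x < R"
      using dist_in_closed_segment[OF m] xc by (simp add: dist_commute)
    have mE: "ball m R \<inter> E = {}"
      using im ball_disjoint_iff_le_infdist[OF assms(3)] by blast
    obtain a where a: "a \<in> E" and "infdist m E = dist m a"
      by (rule infdist_attains_inf[OF assms(2,3)])
    with im have dma: "dist m a = R"
      by simp
    obtain v where v: "v \<in> normals_R R E a" and av: "a + R *\<^sub>R v = m"
      using touching_ball_normal[OF assms(1) mE dma] .
    have "a \<in> frontier E"
      using touching_ball_in_frontier[OF assms(1) mE a dma] .
    then have "x \<in> C_set R a (normals_R R E a)"
      using x by blast
    then have "x \<notin> ball m R"
      using v av unfolding C_set_def by blast
    then show False
      using mx by (simp add: dist_commute)
  qed
qed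

theorem mainTheorem12:
  fixes E :: "'a::euclidean_space set" and R :: real
  assumes "R > 0" and "R_supported R E"
  shows "co_R R E = nbhd R E \<inter> (\<Inter>a\<in>frontier E. C_set R a (normals_R R E a))"
proof -
  have ne: "E \<noteq> {}" and closed: "closed E"
    using assms(2) by (auto simp: R_supported_def is_body_def)
  show ?thesis
  proof
    show "co_R R E \<subseteq> nbhd R E \<inter> (\<Inter>a\<in>frontier E. C_set R a (normals_R R E a))"
      using co_R_subset_nbhd[OF assms(1) ne] co_R_subset_C_set_normals by blast
    show "nbhd R E \<inter> (\<Inter>a\<in>frontier E. C_set R a (normals_R R E a)) \<subseteq> co_R R E"
      using nbhd_inter_C_sets_subset_co_R[OF assms(1) closed ne] .
  qed
qed

end
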